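(* There are constants $k$ and $C$ such that the following holds. Let $p>2$ be prime, $\Gamma_0$ a $3$-regular connected graph, $\Gamma_1 = \mathrm{CFI}(\Gamma_0)$, $\Gamma_2 = \widetilde{\mathrm{CFI}(\Gamma_0)}$, and for $i\in\{1,2\}$ let $G_i = G_{\Gamma_i}$ be the group from Mekler's construction, $n=|G_i|$. Let $u, v \in G_{i}$ with $|\mathrm{supp}(u)| = 1$ and $|\mathrm{supp}(v)| > 1$. In the count-free Version I pebble game on $(G_i, G_i)$, from a position in which $u \mapsto v$ has been pebbled, Spoiler can win using at most $k$ additional pebble pairs within $C\log \log n + C$ additional rounds.
   Context: CFI construction: for a connected graph $\Gamma_0$, each vertex $v$ of degree $d$ is replaced by a gadget with external vertices $a_1^v,b_1^v,\ldots,a_d^v,b_d^v$ (pair $i$ associated to the $i$-th edge at $v$) and internal vertices indexed by strings in $\{0,1\}^d$ with an even number of $1$'s, the internal vertex with string $s$ adjacent to $a_i^v$ if $s_i=0$ and to $b_i^v$ otherwise; for each edge $xy$ of $\Gamma_0$ with associated pairs $(a_i^x,b_i^x),(a_j^y,b_j^y)$ add edges $a_i^xa_j^y$, $b_i^xb_j^y$ to get $\mathrm{CFI}(\Gamma_0)$; $\widetilde{\mathrm{CFI}(\Gamma_0)}$ instead uses $a_i^xb_j^y$, $b_i^xa_j^y$ for one edge of $\Gamma_0$. Mekler's construction: for a simple graph $\Gamma$ on $v_1,\ldots,v_m$, $G_\Gamma = \langle x_1,\ldots,x_m \mid x_i^p=1, [[x_i,x_j],x_k]=1, [x_i,x_j]=1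 \text{ if } v_iv_j\in E(\Gamma)\rangle$; every element is $x_1^{d_1}\cdots x_m^{d_m}c$ with $c$ in the commutator subgroup and the $d_i$ unique mod $p$; $\mathrm{supp}(x)=\{v_i: d_i\not\equiv 0 \pmod p\}$. Count-free Version I pebble game on groups $G,H$: each round Spoiler picks up a pebble pair, the winning condition is checked, Spoiler places one pebble of the pair on an element of either group and Duplicator places the partner on an element of the other group; Spoiler wins when the map $g_i\mapsto h_i$ between pebbled elements fails to satisfy, for all $i,j,t$: $g_i=g_j\iff h_i=h_j$ and $g_ig_j=g_t\iff h_ih_j=h_t$. *)

theory Defs
  imports "HOL-Algebra.Algebra" Complex_Main
begin

definition simple_graph :: "'v set \<Rightarrow> ('v \<Rightarrow> 'v \<Rightarrow> bool) \<Rightarrow> bool" where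
  "simple_graph V E \<longleftrightarrow> finite V \<and> (\<forall>x y. E x y \<longrightarrow> x \<in> V \<and> y \<in> V)
     \<and> (\<forall>x y. E x y \<longrightarrow> E y x) \<and> (\<forall>x. \<not> E x x)"

definition graph_connected :: "'v set \<Rightarrow> ('v \<Rightarrow> 'v \<Rightarrow> bool) \<Rightarrow> bool" where
  "graph_connected V E \<longleftrightarrow> V \<noteq> {} \<and> (\<forall>x\<in>V. \<forall>y\<in>V. (x, y) \<in> {(a, b). E a b}\<^sup>*)"

definition regular3 :: "'v set \<Rightarrow> ('v \<Rightarrow> 'v \<Rightarrow> bool) \<Rightarrow> bool" where
  "regular3 V E \<longleftrightarrow> (\<forall>x\<in>V. card {y. E x y} = 3)"

text \<open>Ext v w False is the external vertex a associated to the edge vw at v,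
  Ext v w True the external vertex b. Inner v S is the internal vertex of the gadget at v
  whose string has 1's exactly at the neighbours in S.\<close>
datatype 'v cfi_vert = Ext 'v 'v bool | Inner 'v "'v set"

definition cfi_V :: "'v set \<Rightarrow> ('v \<Rightarrow> 'v \<Rightarrow> bool) \<Rightarrow> 'v cfi_vert set" where
  "cfi_V V E = {Ext v w b | v w b. v \<in> V \<and> E v w}
      \<union> {Inner v S | v S. v \<in> V \<and> S \<subseteq> {w. E v w} \<and> even (card S)}"

text \<open>T is the set of twisted edges of the base graph: T = {} gives CFI(Gamma0),
  T = {{x,y}} for an edge xy gives the twisted graph.\<close>
definition cfi_E :: "'v set \<Rightarrow> ('v \<Rightarrow> 'v \<Rightarrow> bool) \<Rightarrow> 'v set set
    \<Rightarrow> 'v cfi_vert \<Rightarrow> 'v cfi_vert \<Rightarrow> bool" where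
  "cfi_E V E T x y \<longleftrightarrow> x \<in> cfi_V V E \<and> y \<in> cfi_V V E \<and>
     ((\<exists>v S w b. x = Inner v S \<and> y = Ext v w b \<and> (b \<longleftrightarrow> w \<in> S))
    \<or> (\<exists>v S w b. y = Inner v S \<and> x = Ext v w b \<and> (b \<longleftrightarrow> w \<in> S))
    \<or> (\<exists>v w b b'. x = Ext v w b \<and> y = Ext w v b' \<and> (b' \<longleftrightarrow> (b \<noteq> ({v, w} \<in> T)))))"

text \<open>Words over the generators; since every generator has order p, the inverse of x
  is x^(p-1), and the group is presented as a monoid.\<close>
definition winv :: "nat \<Rightarrow> 'v list \<Rightarrow> 'v list" where
  "winv p w = concat (map (\<lambda>x. replicate (p - 1) x) (rev w))"

definition wcomm :: "nat \<Rightarrow> 'v list \<Rightarrow> 'v list \<Rightarrow> 'v list" where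
  "wcomm p a b = winv p a @ winv p b @ a @ b"

inductive meq :: "nat \<Rightarrow> 'v set \<Rightarrow> ('v \<Rightarrow> 'v \<Rightarrow> bool) \<Rightarrow> 'v list \<Rightarrow> 'v list \<Rightarrow> bool"
  for p V E where
  refl: "w \<in> lists V \<Longrightarrow> meq p V E w w"
| sym: "meq p V E a b \<Longrightarrow> meq p V E b a"
| trans: "meq p V E a b \<Longrightarrow> meq p V E b c \<Longrightarrow> meq p V E a c"
| cong: "meq p V E a b \<Longrightarrow> meq p V E c d \<Longrightarrow> meq p V E (a @ c) (b @ d)"
| pow: "x \<in> V \<Longrightarrow> meq p V E (replicate p x) []"
| cls2: "x \<in> V \<Longrightarrow> y \<in> V \<Longrightarrow> z \<in> V \<Longrightarrow> meq p V E (wcomm p (wcomm p [x] [y]) [z]) []"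
| edge: "x \<in> V \<Longrightarrow> y \<in> V \<Longrightarrow> E x y \<Longrightarrow> meq p V E (wcomm p [x] [y]) []"

definition meq_class :: "nat \<Rightarrow> 'v set \<Rightarrow> ('v \<Rightarrow> 'v \<Rightarrow> bool) \<Rightarrow> 'v list \<Rightarrow> 'v list set" where
  "meq_class p V E w = {w' \<in> lists V. meq p V E w w'}"

definition mekler :: "nat \<Rightarrow> 'v set \<Rightarrow> ('v \<Rightarrow> 'v \<Rightarrow> bool) \<Rightarrow> 'v list set monoid" where
  "mekler p V E = \<lparr> carrier = meq_class p V E ` lists V,
      monoid.mult = (\<lambda>A B. meq_class p V E ((SOME a. a \<in> A) @ (SOME b. b \<in> B))),
      monoid.one = meq_class p V E [] \<rparr>"

definition mgen :: "nat \<Rightarrow> 'v set \<Rightarrow> ('v \<Rightarrow> 'v \<Rightarrow> bool) \<Rightarrow> 'v \<Rightarrow> 'v list set" where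
  "mgen p V E x = meq_class p V E [x]"

definition msupp :: "nat \<Rightarrow> 'v set \<Rightarrow> ('v \<Rightarrow> 'v \<Rightarrow> bool) \<Rightarrow> 'v list set \<Rightarrow> 'v set" where
  "msupp p V E g = {v \<in> V. \<exists>vs d c. distinct vs \<and> set vs = V \<and> (\<forall>w. d w < p) \<and> d v \<noteq> 0
      \<and> c \<in> derived (mekler p V E) (carrier (mekler p V E))
      \<and> g = foldr (\<lambda>w acc. (mgen p V E w [^]\<^bsub>mekler p V E\<^esub> (d w)) \<otimes>\<^bsub>mekler p V E\<^esub> acc) vs
               \<one>\<^bsub>mekler p V E\<^esub> \<otimes>\<^bsub>mekler p V E\<^esub> c}"

definition pebble_ok :: "('g, 'a) monoid_scheme \<Rightarrow> ('h, 'b) monoid_scheme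
    \<Rightarrow> (nat \<Rightarrow> ('g \<times> 'h) option) \<Rightarrow> bool" where
  "pebble_ok G H pos \<longleftrightarrow> (\<forall>i j t gi hi gj hj gt ht.
      pos i = Some (gi, hi) \<longrightarrow> pos j = Some (gj, hj) \<longrightarrow> pos t = Some (gt, ht) \<longrightarrow>
      ((gi = gj \<longleftrightarrow> hi = hj) \<and> (gi \<otimes>\<^bsub>G\<^esub> gj = gt \<longleftrightarrow> hi \<otimes>\<^bsub>H\<^esub> hj = ht)))"

text \<open>In each round Spoiler picks up a pair i (placed or not),
  places one of its pebbles on an element of G or of H, and Duplicator answers in the
  other group. (Picking up pebbles never creates a violation, so checking the winning
  condition at the current position is equivalent to checking it after pick-up.)\<close>
fun spoiler_wins :: "('g, 'a) monoid_scheme \<Rightarrow> ('h, 'b) monoid_scheme \<Rightarrow> nat \<Rightarrow> nat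
    \<Rightarrow> (nat \<Rightarrow> ('g \<times> 'h) option) \<Rightarrow> bool" where
  "spoiler_wins G H k 0 pos = (\<not> pebble_ok G H pos)"
| "spoiler_wins G H k (Suc r) pos = (\<not> pebble_ok G H pos \<or>
     (\<exists>i\<le>k. (\<exists>g\<in>carrier G. \<forall>h\<in>carrier H. spoiler_wins G H k r (pos(i := Some (g, h))))
           \<or> (\<exists>h\<in>carrier H. \<forall>g\<in>carrier G. spoiler_wins G H k r (pos(i := Some (g, h))))))"

end

theory Submission
  imports Defs
begin

text \<open>Write \<open>u = x\<^sub>a\<^sup>k c\<close> with \<open>c\<close> central and pick two non-adjacent neighbours \<open>n\<^sub>1\<close>, \<open>n\<^sub>2\<close>
  of \<open>a\<close> in the CFI graph. Spoiler pebbles \<open>y = x\<^sub>n\<^sub>1\<close>, \<open>z = x\<^sub>n\<^sub>2\<close>, \<open>u y\<close>, \<open>u z\<close> and \<open>y z\<close>.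
  As \<open>y\<close> and \<open>z\<close> commute with \<open>u\<close>, Duplicator's answers \<open>y'\<close>, \<open>z'\<close> must commute with \<open>v\<close>,
  and as \<open>y z \<noteq> z y\<close> they must not commute with each other. This is impossible: CFI graphs
  of cubic graphs contain no 4-cycle, and in the Mekler group of a C4-free graph the centralizer
  of an element whose support has two vertices is abelian. Indeed, modulo \<open>p\<close> two words commute
  iff their exponent vectors are proportional on every non-edge (one direction by counting ordered
  pairs of letters, the other by expanding the commutator bilinearly), and proportionality to a
  vector with two units propagates in a C4-free graph. So Spoiler wins in five rounds, whatever the
  twist and without using connectivity.\<close>

section \<open>Commutators and the centre of a group\<close>

definition commutator :: "('a, 'b) monoid_scheme \<Rightarrow> 'a \<Rightarrow> 'a \<Rightarrow> 'a" where
  "commutator G g h = inv\<^bsub>G\<^esub> g \<otimes>\<^bsub>G\<^esub> inv\<^bsub>G\<^esub> h \<otimes>\<^bsub>G\<^esub> g \<otimes>\<^bsub>G\<^esub> h"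

definition center :: "('a, 'b) monoid_scheme \<Rightarrow> 'a set" where
  "center G = {z \<in> carrier G. \<forall>x\<in>carrier G. z \<otimes>\<^bsub>G\<^esub> x = x \<otimes>\<^bsub>G\<^esub> z}"

context group
begin

lemma inv_mult_cancel_left [simp]:
  "x \<in> carrier G \<Longrightarrow> y \<in> carrier G \<Longrightarrow> inv x \<otimes> (x \<otimes> y) = y"
  by (simp flip: m_assoc)

lemma mult_inv_cancel_left [simp]:
  "x \<in> carrier G \<Longrightarrow> y \<in> carrier G \<Longrightarrow> x \<otimes> (inv x \<otimes> y) = y"
  by (simp flip: m_assoc)

lemma commutator_closed [simp]:
  "g \<in> carrier G \<Longrightarrow> h \<in> carrier G \<Longrightarrow> commutator G g h \<in> carrier G"
  by (simp add: commutator_def)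

lemma commutator_eq_one_iff:
  assumes "g \<in> carrier G" "h \<in> carrier G"
  shows "commutator G g h = \<one> \<longleftrightarrow> g \<otimes> h = h \<otimes> g"
proof -
  have "commutator G g h = inv (h \<otimes> g) \<otimes> (g \<otimes> h)"
    using assms by (simp add: commutator_def inv_mult_group m_assoc)
  then show ?thesis
    using assms by (simp add: inv_solve_left')
qed

lemma commutator_self [simp]: "g \<in> carrier G \<Longrightarrow> commutator G g g = \<one>"
  by (simp add: commutator_def m_assoc)

lemma commutator_swap:
  assumes "g \<in> carrier G" "h \<in> carrier G"
  shows "commutator G h g \<otimes> commutator G g h = \<one>"
  using assms by (simp add: commutator_def m_assoc)

lemma center_subset_carrier: "center G \<subseteq> carrier G"
  by (auto simp: center_def)

lemma centerD: "z \<in> center G \<Longrightarrow> x \<in> carrier G \<Longrightarrow> z \<otimes> x = x \<otimes> z"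
  by (simp add: center_def)

lemma one_in_center [simp]: "\<one> \<in> center G"
  by (simp add: center_def)

lemma center_subgroup: "subgroup (center G) G"
proof (rule subgroupI[OF center_subset_carrier])
  show "center G \<noteq> {}"
    using one_in_center by blast
next
  fix z assume z: "z \<in> center G"
  then have zc: "z \<in> carrier G" by (simp add: center_def)
  have "inv z \<otimes> x = x \<otimes> inv z" if "x \<in> carrier G" for x
  proof -
    have "inv z \<otimes> x = inv z \<otimes> (x \<otimes> z) \<otimes> inv z"
      using that zc by (simp add: m_assoc)
    also have "\<dots> = inv z \<otimes> (z \<otimes> x) \<otimes> inv z"
      by (simp add: centerD[OF z that])
    also have "\<dots> = x \<otimes> inv z"
      using that zc by simp
    finally show ?thesis .
  qed
  with zc show "inv z \<in> center G" by (simp add: center_def)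
next
  fix z w assume z: "z \<in> center G" and w: "w \<in> center G"
  then have zc: "z \<in> carrier G" and wc: "w \<in> carrier G" by (auto simp: center_def)
  have "z \<otimes> w \<otimes> x = x \<otimes> (z \<otimes> w)" if "x \<in> carrier G" for x
  proof -
    have "z \<otimes> w \<otimes> x = z \<otimes> (x \<otimes> w)"
      using that zc wc by (simp add: m_assoc centerD[OF w that])
    also have "\<dots> = x \<otimes> (z \<otimes> w)"
      using that zc wc by (simp add: centerD[OF z that] flip: m_assoc)
    finally show ?thesis .
  qed
  with zc wc show "z \<otimes> w \<in> center G" by (simp add: center_def)
qed

lemma center_comm_group: "comm_group (G\<lparr>carrier := center G\<rparr>)"
proof -
  interpret Z: group "G\<lparr>carrier := center G\<rparr>"
    using subgroup.subgroup_is_group[OF center_subgroup is_group] .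
  show ?thesis
  proof (rule Z.group_comm_groupI)
    fix x y assume "x \<in> carrier (G\<lparr>carrier := center G\<rparr>)" "y \<in> carrier (G\<lparr>carrier := center G\<rparr>)"
    then show "x \<otimes>\<^bsub>G\<lparr>carrier := center G\<rparr>\<^esub> y = y \<otimes>\<^bsub>G\<lparr>carrier := center G\<rparr>\<^esub> x"
      using centerD[of x y] center_subset_carrier by auto
  qed
qed

lemma commutator_mult_left:
  assumes "a \<in> carrier G" "b \<in> carrier G" "c \<in> carrier G" "commutator G a c \<in> center G"
  shows "commutator G (a \<otimes> b) c = commutator G a c \<otimes> commutator G b c"
proof -
  have "commutator G (a \<otimes> b) c = inv b \<otimes> commutator G a c \<otimes> (inv c \<otimes> b \<otimes> c)"
    using assms by (simp add: commutator_def m_assoc inv_mult_group)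
  also have "inv b \<otimes> commutator G a c = commutator G a c \<otimes> inv b"
    using centerD[OF assms(4)] assms by simp
  finally show ?thesis
    using assms commutator_closed[of a c] by (simp add: commutator_def m_assoc)
qed

lemma commutator_mult_right:
  assumes "a \<in> carrier G" "b \<in> carrier G" "c \<in> carrier G" "commutator G a b \<in> center G"
  shows "commutator G a (b \<otimes> c) = commutator G a c \<otimes> commutator G a b"
proof -
  have "commutator G a (b \<otimes> c) = commutator G a c \<otimes> (inv c \<otimes> commutator G a b \<otimes> c)"
    using assms by (simp add: commutator_def m_assoc inv_mult_group)
  also have "inv c \<otimes> commutator G a b = commutator G a b \<otimes> inv c"
    using centerD[OF assms(4)] assms by simp
  finally show ?thesis
    using assms commutator_closed[of a b] by (simp add: m_assoc)
qed

end

section \<open>The group of a Mekler presentation\<close>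

lemma winv_Nil [simp]: "winv p [] = []"
  by (simp add: winv_def)

lemma winv_Cons: "winv p (x # w) = winv p w @ replicate (p - 1) x"
  by (simp add: winv_def)

lemma set_winv: "set (winv p w) \<subseteq> set w"
  by (induct w) (auto simp: winv_Cons)

lemma winv_in_lists: "w \<in> lists V \<Longrightarrow> winv p w \<in> lists V"
  using set_winv[of p w] by auto

lemma replicate_in_lists [simp]: "x \<in> V \<Longrightarrow> replicate n x \<in> lists V"
  by (induct n) auto

lemma wcomm_in_lists: "a \<in> lists V \<Longrightarrow> b \<in> lists V \<Longrightarrow> wcomm p a b \<in> lists V"
  by (simp add: wcomm_def winv_in_lists)

locale mekler_presentation =
  fixes p :: nat and V :: "'v set" and E :: "'v \<Rightarrow> 'v \<Rightarrow> bool"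
  assumes p_pos: "0 < p"
begin

abbreviation M where "M \<equiv> mekler p V E"
abbreviation cls where "cls \<equiv> meq_class p V E"
abbreviation gen where "gen \<equiv> mgen p V E"

lemma meq_class_eq: "meq p V E a b \<Longrightarrow> cls a = cls b"
  unfolding meq_class_def using meq.sym meq.trans by blast

lemma meq_of_meq_class_eq: "a \<in> lists V \<Longrightarrow> cls a = cls b \<Longrightarrow> meq p V E b a"
  using meq.refl[of a] by (auto simp: meq_class_def)

lemma carrier_mekler: "carrier M = cls ` lists V"
  by (simp add: mekler_def)

lemma one_mekler: "\<one>\<^bsub>M\<^esub> = cls []"
  by (simp add: mekler_def)

lemma meq_class_in_carrier [simp]: "w \<in> lists V \<Longrightarrow> cls w \<in> carrier M"
  by (simp add: carrier_mekler)

lemma mult_meq_class: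
  assumes "a \<in> lists V" "b \<in> lists V"
  shows "cls a \<otimes>\<^bsub>M\<^esub> cls b = cls (a @ b)"
proof -
  have "a \<in> cls a" "b \<in> cls b"
    using assms meq.refl by (simp_all add: meq_class_def)
  then have "(SOME a'. a' \<in> cls a) \<in> cls a" "(SOME b'. b' \<in> cls b) \<in> cls b"
    by (metis someI)+
  then have "meq p V E a (SOME a'. a' \<in> cls a)" "meq p V E b (SOME b'. b' \<in> cls b)"
    by (simp_all add: meq_class_def)
  then have "cls ((SOME a'. a' \<in> cls a) @ (SOME b'. b' \<in> cls b)) = cls (a @ b)"
    by (metis meq.cong meq_class_eq)
  then show ?thesis
    by (simp add: mekler_def)
qed

lemma meq_winv_cancel: "w \<in> lists V \<Longrightarrow> meq p V E (winv p w @ w) []"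
proof (induct w)
  case Nil
  then show ?case by (simp add: meq.refl)
next
  case (Cons x w)
  then have x: "x \<in> V" and w: "w \<in> lists V" by simp_all
  have "replicate (p - 1) x @ x # w = replicate p x @ w"
    using p_pos by (simp add: replicate_app_Cons_same flip: replicate_Suc)
  then have "winv p (x # w) @ x # w = winv p w @ replicate p x @ w"
    by (simp add: winv_Cons)
  moreover have "meq p V E (winv p w @ replicate p x @ w) (winv p w @ w)"
    using meq.cong[OF meq.refl[OF winv_in_lists[OF w]] meq.cong[OF meq.pow[OF x] meq.refl[OF w]]]
    by simp
  ultimately show ?case
    using meq.trans Cons.hyps[OF w] by metis
qed

lemma group_mekler: "group M"
proof (rule groupI)
  fix x y z
  assume "x \<in> carrier M" "y \<in> carrier M" "z \<in> carrier M"
  then obtain a b c where "a \<in> lists V" "b \<in> lists V" "c \<in> lists V" "x = cls a" "y = cls b" "z = cls c"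
    by (auto simp: carrier_mekler)
  then show "x \<otimes>\<^bsub>M\<^esub> y \<otimes>\<^bsub>M\<^esub> z = x \<otimes>\<^bsub>M\<^esub> (y \<otimes>\<^bsub>M\<^esub> z)"
    by (simp add: mult_meq_class)
next
  fix x assume "x \<in> carrier M"
  then obtain a where a: "a \<in> lists V" "x = cls a"
    by (auto simp: carrier_mekler)
  then show "\<one>\<^bsub>M\<^esub> \<otimes>\<^bsub>M\<^esub> x = x"
    by (simp add: one_mekler mult_meq_class)
  have "cls (winv p a) \<otimes>\<^bsub>M\<^esub> x = \<one>\<^bsub>M\<^esub>"
    using a winv_in_lists[OF a(1)] meq_class_eq[OF meq_winv_cancel[OF a(1)]]
    by (simp add: mult_meq_class one_mekler)
  then show "\<exists>y\<in>carrier M. y \<otimes>\<^bsub>M\<^esub> x = \<one>\<^bsub>M\<^esub>"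
    using winv_in_lists[OF a(1)] meq_class_in_carrier by blast
next
  fix x y
  assume "x \<in> carrier M" "y \<in> carrier M"
  then obtain a b where "a \<in> lists V" "b \<in> lists V" "x = cls a" "y = cls b"
    by (auto simp: carrier_mekler)
  then show "x \<otimes>\<^bsub>M\<^esub> y \<in> carrier M"
    by (simp add: mult_meq_class)
qed (simp add: one_mekler)

sublocale M: group M
  by (rule group_mekler)

lemma gen_in_carrier [simp]: "x \<in> V \<Longrightarrow> gen x \<in> carrier M"
  by (simp add: mgen_def)

lemma meq_class_Cons: "x \<in> V \<Longrightarrow> w \<in> lists V \<Longrightarrow> cls (x # w) = gen x \<otimes>\<^bsub>M\<^esub> cls w"
  using mult_meq_class[of "[x]" w] by (simp add: mgen_def)

lemma inv_meq_class:
  assumes "w \<in> lists V"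
  shows "inv\<^bsub>M\<^esub> (cls w) = cls (winv p w)"
proof (rule M.inv_equality)
  show "cls (winv p w) \<otimes>\<^bsub>M\<^esub> cls w = \<one>\<^bsub>M\<^esub>"
    using assms winv_in_lists[OF assms]
    by (simp add: mult_meq_class one_mekler meq_class_eq[OF meq_winv_cancel])
qed (simp_all add: assms winv_in_lists)

lemma commutator_meq_class:
  "a \<in> lists V \<Longrightarrow> b \<in> lists V \<Longrightarrow> commutator M (cls a) (cls b) = cls (wcomm p a b)"
  by (simp add: commutator_def inv_meq_class mult_meq_class winv_in_lists wcomm_def)

lemma gen_pow: "x \<in> V \<Longrightarrow> gen x [^]\<^bsub>M\<^esub> n = cls (replicate n x)"
proof (induct n)
  case 0
  then show ?case by (simp add: one_mekler)
next
  case (Suc n)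
  then show ?case
    using mult_meq_class[of "replicate n x" "[x]"] by (simp add: mgen_def replicate_append_same)
qed

lemma gen_pow_p: "x \<in> V \<Longrightarrow> gen x [^]\<^bsub>M\<^esub> p = \<one>\<^bsub>M\<^esub>"
  by (simp add: gen_pow one_mekler meq_class_eq meq.pow)

lemma commutator_gen_edge: "x \<in> V \<Longrightarrow> y \<in> V \<Longrightarrow> E x y \<Longrightarrow> commutator M (gen x) (gen y) = \<one>\<^bsub>M\<^esub>"
  by (simp add: mgen_def commutator_meq_class one_mekler meq_class_eq meq.edge)

lemma in_center_if_commutes_with_gens:
  assumes z: "z \<in> carrier M" and comm: "\<And>x. x \<in> V \<Longrightarrow> z \<otimes>\<^bsub>M\<^esub> gen x = gen x \<otimes>\<^bsub>M\<^esub> z"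
  shows "z \<in> center M"
proof -
  have "z \<otimes>\<^bsub>M\<^esub> cls w = cls w \<otimes>\<^bsub>M\<^esub> z" if "w \<in> lists V" for w
    using that
  proof (induction w)
    case Nil
    then show ?case using z by (simp flip: one_mekler)
  next
    case (Cons x w)
    then have x: "x \<in> V" and w: "w \<in> lists V" by simp_all
    have "z \<otimes>\<^bsub>M\<^esub> cls (x # w) = (z \<otimes>\<^bsub>M\<^esub> gen x) \<otimes>\<^bsub>M\<^esub> cls w"
      using x w z by (simp add: meq_class_Cons M.m_assoc)
    also have "\<dots> = gen x \<otimes>\<^bsub>M\<^esub> (z \<otimes>\<^bsub>M\<^esub> cls w)"
      using x w z comm[OF x] by (simp add: M.m_assoc)
    also have "\<dots> = cls (x # w) \<otimes>\<^bsub>M\<^esub> z"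
      using x w z Cons.IH by (simp add: meq_class_Cons M.m_assoc)
    finally show ?case .
  qed
  then show ?thesis
    using z by (auto simp: center_def carrier_mekler)
qed

lemma commutator_gens_in_center:
  "x \<in> V \<Longrightarrow> y \<in> V \<Longrightarrow> commutator M (gen x) (gen y) \<in> center M"
  using wcomm_in_lists[of "[x]" V "[y]"]
  by (intro in_center_if_commutes_with_gens)
    (auto simp: mgen_def commutator_meq_class one_mekler meq_class_eq meq.cls2
      simp flip: M.commutator_eq_one_iff)

text \<open>The relations only make commutators of generators central; bilinearity does the rest.\<close>

lemma commutator_in_center:
  assumes g: "g \<in> carrier M" and h: "h \<in> carrier M"
  shows "commutator M g h \<in> center M"
proof -
  have gen_word: "commutator M (gen x) (cls b) \<in> center M" if "x \<in> V" "b \<in> lists V" for x b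
    using that(2)
  proof (induction b)
    case Nil
    then show ?case using that by (simp add: commutator_def M.center_subgroup subgroup.one_closed flip: one_mekler)
  next
    case (Cons y b)
    then show ?case
      using that commutator_gens_in_center[of x y]
      by (simp add: meq_class_Cons M.commutator_mult_right subgroup.m_closed[OF M.center_subgroup])
  qed
  obtain a b where "a \<in> lists V" "b \<in> lists V" "g = cls a" "h = cls b"
    using g h by (auto simp: carrier_mekler)
  moreover have "commutator M (cls a) (cls b) \<in> center M" if "a \<in> lists V" "b \<in> lists V" for a b
    using that
  proof (induction a)
    case Nil
    then show ?case by (simp add: commutator_def M.center_subgroup subgroup.one_closed flip: one_mekler)
  next
    case (Cons x a)
    then show ?case
      using gen_word[of x b]
      by (simp add: meq_class_Cons M.commutator_mult_left subgroup.m_closed[OF M.center_subgroup])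
  qed
  ultimately show ?thesis by blast
qed

lemma commutator_mult_left_mekler:
  "\<lbrakk>a \<in> carrier M; b \<in> carrier M; c \<in> carrier M\<rbrakk>
   \<Longrightarrow> commutator M (a \<otimes>\<^bsub>M\<^esub> b) c = commutator M a c \<otimes>\<^bsub>M\<^esub> commutator M b c"
  by (simp add: M.commutator_mult_left commutator_in_center)

lemma commutator_mult_right_mekler:
  "\<lbrakk>a \<in> carrier M; b \<in> carrier M; c \<in> carrier M\<rbrakk>
   \<Longrightarrow> commutator M a (b \<otimes>\<^bsub>M\<^esub> c) = commutator M a c \<otimes>\<^bsub>M\<^esub> commutator M a b"
  by (simp add: M.commutator_mult_right commutator_in_center)

lemma commutator_pow_right:
  assumes "a \<in> carrier M" "b \<in> carrier M"
  shows "commutator M a (b [^]\<^bsub>M\<^esub> (n::nat)) = commutator M a b [^]\<^bsub>M\<^esub> n"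
proof (induct n)
  case 0
  then show ?case using assms by (simp add: commutator_def)
next
  case (Suc n)
  then show ?case
    using assms M.nat_pow_Suc2[of "commutator M a b" n] by (simp add: commutator_mult_right_mekler)
qed

lemma derived_subset_center: "derived M (carrier M) \<subseteq> center M"
  unfolding derived_def
proof (rule M.generate_subgroup_incl[OF _ M.center_subgroup], safe)
  fix g h assume "g \<in> carrier M" "h \<in> carrier M"
  then show "g \<otimes>\<^bsub>M\<^esub> h \<otimes>\<^bsub>M\<^esub> inv\<^bsub>M\<^esub> g \<otimes>\<^bsub>M\<^esub> inv\<^bsub>M\<^esub> h \<in> center M"
    using commutator_in_center[of "inv\<^bsub>M\<^esub> g" "inv\<^bsub>M\<^esub> h"] by (simp add: commutator_def)
qed

end

section \<open>Exponent sums and ordered pairs of letters\<close>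

definition occ :: "'v \<Rightarrow> 'v list \<Rightarrow> int" where
  "occ i w = int (count_list w i)"

fun pairs_before :: "'v \<Rightarrow> 'v \<Rightarrow> 'v list \<Rightarrow> int" where
  "pairs_before i j [] = 0"
| "pairs_before i j (x # w) = (if x = i then occ j w else 0) + pairs_before i j w"

definition imbalance :: "'v \<Rightarrow> 'v \<Rightarrow> 'v list \<Rightarrow> int" where
  "imbalance i j w = pairs_before i j w - pairs_before j i w"

definition cross :: "'v \<Rightarrow> 'v \<Rightarrow> 'v list \<Rightarrow> 'v list \<Rightarrow> int" where
  "cross i j a b = occ i a * occ j b - occ j a * occ i b"

lemma occ_Nil [simp]: "occ i [] = 0"
  by (simp add: occ_def)

lemma occ_Cons [simp]: "occ i (x # w) = (if x = i then 1 else 0) + occ i w"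
  by (simp add: occ_def)

lemma occ_append [simp]: "occ i (a @ b) = occ i a + occ i b"
  by (simp add: occ_def)

lemma occ_replicate [simp]: "occ i (replicate n x) = (if x = i then int n else 0)"
  by (induct n) auto

lemma pairs_before_append:
  "pairs_before i j (a @ b) = pairs_before i j a + pairs_before i j b + occ i a * occ j b"
  by (induct a) (auto simp: algebra_simps)

lemma pairs_before_replicate: "i \<noteq> j \<Longrightarrow> pairs_before i j (replicate n x) = 0"
  by (induct n) auto

lemma imbalance_Nil [simp]: "imbalance i j [] = 0"
  by (simp add: imbalance_def)

lemma imbalance_append: "imbalance i j (a @ b) = imbalance i j a + imbalance i j b + cross i j a b"
  by (simp add: imbalance_def cross_def pairs_before_append)

lemma cross_append_left: "cross i j (a @ b) c = cross i j a c + cross i j b c"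
  by (simp add: cross_def algebra_simps)

lemma cross_append_right: "cross i j a (b @ c) = cross i j a b + cross i j a c"
  by (simp add: cross_def algebra_simps)

lemma dvd_mult_diff_mult:
  fixes m :: int
  assumes "m dvd x - x'" "m dvd y - y'"
  shows "m dvd x * y - x' * y'"
proof -
  have "x * y - x' * y' = x * (y - y') + y' * (x - x')"
    by (simp add: algebra_simps)
  then show ?thesis
    using assms by simp
qed

lemma int_dvd_diff_imp_mod_eq: "int p dvd int m - int n \<Longrightarrow> m mod p = n mod p"
proof -
  assume "int p dvd int m - int n"
  then have "int m mod int p = int n mod int p"
    by (simp add: mod_eq_dvd_iff)
  then show ?thesis
    by (simp flip: of_nat_mod)
qed

context mekler_presentation
begin

lemma occ_winv: "occ i (winv p w) = (int p - 1) * occ i w"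
  using p_pos by (induct w) (auto simp: winv_Cons of_nat_diff algebra_simps)

lemma cross_winv_left: "cross i j (winv p a) b = (int p - 1) * cross i j a b"
  by (simp add: cross_def occ_winv algebra_simps)

lemma cross_winv_right: "cross i j a (winv p b) = (int p - 1) * cross i j a b"
  by (simp add: cross_def occ_winv algebra_simps)

lemma occ_wcomm: "occ i (wcomm p a b) = int p * (occ i a + occ i b)"
  by (simp add: wcomm_def occ_winv algebra_simps)

lemma pairs_before_winv: "i \<noteq> j \<Longrightarrow> int p dvd pairs_before i j (winv p w) - pairs_before j i w"
proof (induct w)
  case Nil
  then show ?case by simp
next
  case (Cons x w)
  have step: "pairs_before i j (winv p (x # w)) - pairs_before j i (x # w) =
     (pairs_before i j (winv p w) - pairs_before j i w)
     + (if x = j then int p * (int p - 2) * occ i w else 0)"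
    using Cons.prems p_pos
    by (auto simp: winv_Cons pairs_before_append pairs_before_replicate occ_winv of_nat_diff algebra_simps)
  show ?case
    unfolding step using Cons by (auto intro: dvd_add)
qed

lemma imbalance_winv:
  assumes "i \<noteq> j"
  shows "int p dvd imbalance i j (winv p w) + imbalance i j w"
proof -
  have "imbalance i j (winv p w) + imbalance i j w
      = (pairs_before i j (winv p w) - pairs_before j i w) - (pairs_before j i (winv p w) - pairs_before i j w)"
    by (simp add: imbalance_def)
  then show ?thesis
    using pairs_before_winv[of i j w] pairs_before_winv[of j i w] assms by (simp add: dvd_diff)
qed

lemma imbalance_wcomm:
  "imbalance i j (wcomm p a b) = (imbalance i j (winv p a) + imbalance i j a)
     + (imbalance i j (winv p b) + imbalance i j b) + ((int p - 1) * (int p - 1) + 1) * cross i j a b"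
  by (simp add: wcomm_def imbalance_append cross_append_left cross_append_right
      cross_winv_left cross_winv_right) (simp add: cross_def algebra_simps)

lemma meq_occ_cong: "meq p V E a b \<Longrightarrow> int p dvd occ i a - occ i b"
proof (induct rule: meq.induct)
  case (sym a b)
  then show ?case by (simp add: dvd_diff_commute)
next
  case (trans a b c)
  then show ?case
    using dvd_add[OF trans.hyps(2,4)] by simp
next
  case (cong a b c d)
  then show ?case
    using dvd_add[OF cong.hyps(2,4)] by (simp add: algebra_simps)
qed (simp_all add: occ_wcomm)

text \<open>For non-adjacent \<open>i\<close>, \<open>j\<close> the imbalance detects the commutator \<open>[x\<^sub>i, x\<^sub>j]\<close>.\<close>

lemma meq_imbalance_cong:
  assumes "i \<noteq> j" "\<not> E i j" "\<not> E j i"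
  shows "meq p V E a b \<Longrightarrow> int p dvd imbalance i j a - imbalance i j b"
proof (induct rule: meq.induct)
  case (sym a b)
  then show ?case by (simp add: dvd_diff_commute)
next
  case (trans a b c)
  then show ?case
    using dvd_add[OF trans.hyps(2,4)] by simp
next
  case (cong a b c d)
  have "imbalance i j (a @ c) - imbalance i j (b @ d) = (imbalance i j a - imbalance i j b)
      + (imbalance i j c - imbalance i j d)
      + ((occ i a * occ j c - occ i b * occ j d) - (occ j a * occ i c - occ j b * occ i d))"
    by (simp add: imbalance_append cross_def)
  moreover have "int p dvd occ i a * occ j c - occ i b * occ j d"
    "int p dvd occ j a * occ i c - occ j b * occ i d"
    using cong.hyps(1,3) by (simp_all add: dvd_mult_diff_mult meq_occ_cong)
  ultimately show ?case
    using cong.hyps(2,4) by (simp add: dvd_add dvd_diff)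
next
  case (pow x)
  then show ?case using assms(1) by (simp add: imbalance_def pairs_before_replicate)
next
  case (cls2 x y z)
  have "int p dvd ((int p - 1) * (int p - 1) + 1) * cross i j (wcomm p [x] [y]) [z]"
    by (simp add: cross_def occ_wcomm)
  then have "int p dvd imbalance i j (wcomm p (wcomm p [x] [y]) [z])"
    by (subst imbalance_wcomm) (rule dvd_add[OF dvd_add[OF imbalance_winv[OF assms(1)] imbalance_winv[OF assms(1)]]])
  then show ?case
    by simp
next
  case (edge x y)
  then have "cross i j [x] [y] = 0"
    using assms by (auto simp: cross_def)
  then have "int p dvd imbalance i j (wcomm p [x] [y])"
    by (subst imbalance_wcomm) (simp add: dvd_add[OF imbalance_winv[OF assms(1)] imbalance_winv[OF assms(1)]])
  then show ?case
    by simp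
qed (simp add: dvd_diff_commute)

end

context mekler_presentation
begin

definition rep_word :: "'v list set \<Rightarrow> 'v list" where
  "rep_word g = (SOME w. w \<in> lists V \<and> g = cls w)"

lemma rep_word_spec: "g \<in> carrier M \<Longrightarrow> rep_word g \<in> lists V \<and> g = cls (rep_word g)"
  unfolding rep_word_def by (rule someI_ex) (auto simp: carrier_mekler)

definition exponent :: "'v \<Rightarrow> 'v list set \<Rightarrow> int" where
  "exponent a g = occ a (rep_word g) mod int p"

lemma exponent_meq_class:
  assumes "w \<in> lists V"
  shows "exponent a (cls w) = occ a w mod int p"
proof -
  have "meq p V E w (rep_word (cls w))"
    using rep_word_spec[of "cls w"] assms by (metis meq_class_in_carrier meq_of_meq_class_eq)
  then show ?thesis
    unfolding exponent_def by (metis meq_occ_cong mod_eq_dvd_iff)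
qed

lemma exponent_mult:
  assumes "g \<in> carrier M" "h \<in> carrier M"
  shows "exponent a (g \<otimes>\<^bsub>M\<^esub> h) = (exponent a g + exponent a h) mod int p"
proof -
  have "g \<otimes>\<^bsub>M\<^esub> h = cls (rep_word g @ rep_word h)"
    using rep_word_spec[OF assms(1)] rep_word_spec[OF assms(2)] mult_meq_class by metis
  then have "exponent a (g \<otimes>\<^bsub>M\<^esub> h) = (occ a (rep_word g) + occ a (rep_word h)) mod int p"
    using rep_word_spec[OF assms(1), THEN conjunct1] rep_word_spec[OF assms(2), THEN conjunct1]
    by (simp add: exponent_meq_class)
  then show ?thesis
    by (simp add: exponent_def mod_add_eq)
qed

lemma exponent_one: "exponent a \<one>\<^bsub>M\<^esub> = 0"
  by (simp add: one_mekler exponent_meq_class)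

lemma exponent_inv:
  assumes "g \<in> carrier M"
  shows "exponent a (inv\<^bsub>M\<^esub> g) = (- exponent a g) mod int p"
proof -
  have "inv\<^bsub>M\<^esub> g = cls (winv p (rep_word g))"
    using rep_word_spec[OF assms] inv_meq_class by metis
  then have "exponent a (inv\<^bsub>M\<^esub> g) = ((int p - 1) * occ a (rep_word g)) mod int p"
    using winv_in_lists[OF rep_word_spec[OF assms, THEN conjunct1]]
    by (simp add: exponent_meq_class occ_winv)
  moreover have "(int p - 1) * occ a (rep_word g) = - occ a (rep_word g) + occ a (rep_word g) * int p"
    by (simp add: algebra_simps)
  ultimately have "exponent a (inv\<^bsub>M\<^esub> g) = (- occ a (rep_word g)) mod int p"
    by (simp only: mod_mult_self1)
  then show ?thesis
    by (simp add: exponent_def mod_minus_eq)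
qed

lemma exponent_gen_pow: "x \<in> V \<Longrightarrow> exponent a (gen x [^]\<^bsub>M\<^esub> (n::nat)) = (if x = a then int n else 0) mod int p"
  by (simp add: gen_pow exponent_meq_class)

lemma exponent_derived:
  assumes "c \<in> derived M (carrier M)"
  shows "exponent a c = 0"
proof -
  have "subgroup {g \<in> carrier M. exponent a g = 0} M"
    by (rule M.subgroupI) (auto simp: exponent_mult exponent_inv exponent_one)
  moreover have "derived_set M (carrier M) \<subseteq> {g \<in> carrier M. exponent a g = 0}"
    by (auto simp: exponent_mult exponent_inv mod_add_eq mod_minus_eq)
  ultimately show ?thesis
    using assms M.generate_subgroup_incl unfolding derived_def by blast
qed

abbreviation gen_prod :: "'v list \<Rightarrow> ('v \<Rightarrow> nat) \<Rightarrow> 'v list set" where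
  "gen_prod vs d \<equiv> foldr (\<lambda>w acc. gen w [^]\<^bsub>M\<^esub> d w \<otimes>\<^bsub>M\<^esub> acc) vs \<one>\<^bsub>M\<^esub>"

lemma gen_prod_closed: "set vs \<subseteq> V \<Longrightarrow> gen_prod vs d \<in> carrier M"
  by (induct vs) auto

lemma exponent_gen_prod:
  "set vs \<subseteq> V \<Longrightarrow> distinct vs \<Longrightarrow> exponent a (gen_prod vs d) = (if a \<in> set vs then int (d a) else 0) mod int p"
proof (induct vs)
  case Nil
  then show ?case by (simp add: exponent_one)
next
  case (Cons w vs)
  then show ?case
    by (auto simp: exponent_mult gen_prod_closed exponent_gen_pow mod_add_eq)
qed

lemma gen_prod_zero: "set vs \<subseteq> V \<Longrightarrow> \<forall>w\<in>set vs. d w = 0 \<Longrightarrow> gen_prod vs d = \<one>\<^bsub>M\<^esub>"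
  by (induct vs) auto

lemma gen_prod_single:
  "\<lbrakk>set vs \<subseteq> V; distinct vs; a \<in> set vs; \<forall>w\<in>set vs. w \<noteq> a \<longrightarrow> d w = 0\<rbrakk>
   \<Longrightarrow> gen_prod vs d = gen a [^]\<^bsub>M\<^esub> d a"
proof (induct vs)
  case (Cons w vs)
  show ?case
  proof (cases "w = a")
    case True
    have "\<forall>w\<in>set vs. d w = 0"
      using Cons.prems True by auto
    then have "gen_prod vs d = \<one>\<^bsub>M\<^esub>"
      using Cons.prems(1) by (simp add: gen_prod_zero)
    then show ?thesis
      using Cons.prems True by simp
  next
    case False
    then show ?thesis
      using Cons by (auto simp: gen_prod_closed)
  qed
qed simp

text \<open>\<^const>\<open>msupp\<close> quantifies over some decomposition \<open>x\<^sub>1\<^sup>d\<^sup>1 \<cdots> x\<^sub>m\<^sup>d\<^sup>m c\<close>;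
  the exponent sums show that the \<open>d\<^sub>v\<close> do not depend on it.\<close>

lemma exponent_msupp: "a \<in> msupp p V E g \<Longrightarrow> exponent a g \<noteq> 0"
proof -
  assume "a \<in> msupp p V E g"
  then obtain vs d c where dec: "a \<in> V" "distinct vs" "set vs = V" "\<forall>w. d w < p" "d a \<noteq> 0"
    "c \<in> derived M (carrier M)" "g = gen_prod vs d \<otimes>\<^bsub>M\<^esub> c"
    unfolding msupp_def by blast
  then have "c \<in> carrier M"
    using derived_subset_center M.center_subset_carrier by blast
  then have "exponent a g = int (d a) mod int p"
    using dec by (simp add: exponent_mult gen_prod_closed exponent_gen_prod exponent_derived)
  then show ?thesis
    using dec(4,5) by simp
qed

lemma msupp_singleton:
  assumes "msupp p V E g = {a}"
  obtains k c where "a \<in> V" "c \<in> center M" "g = gen a [^]\<^bsub>M\<^esub> (k::nat) \<otimes>\<^bsub>M\<^esub> c"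
proof -
  obtain vs d c where dec: "a \<in> V" "distinct vs" "set vs = V" "\<forall>w. d w < p" "d a \<noteq> 0"
    "c \<in> derived M (carrier M)" "g = gen_prod vs d \<otimes>\<^bsub>M\<^esub> c"
    using assms unfolding msupp_def by blast
  have "d w = 0" if "w \<in> V" "w \<noteq> a" for w
    using dec that assms unfolding msupp_def by blast
  then have "g = gen a [^]\<^bsub>M\<^esub> d a \<otimes>\<^bsub>M\<^esub> c"
    using dec gen_prod_single[of vs a d] by auto
  then show ?thesis
    using that dec derived_subset_center by blast
qed

end

section \<open>Commuting words in odd characteristic\<close>

locale mekler_odd_prime = mekler_presentation p V E
  for p and V :: "'v set" and E +
  assumes prime_p: "Factorial_Ring.prime p" and p_gt_2: "2 < p" and finite_V: "finite V"
begin

lemma cross_dvd_if_commute: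
  assumes a: "a \<in> lists V" and b: "b \<in> lists V"
    and comm: "cls a \<otimes>\<^bsub>M\<^esub> cls b = cls b \<otimes>\<^bsub>M\<^esub> cls a"
    and ij: "i \<noteq> j" "\<not> E i j" "\<not> E j i"
  shows "int p dvd cross i j a b"
proof -
  have "meq p V E (b @ a) (a @ b)"
    using comm a b by (intro meq_of_meq_class_eq) (simp_all add: mult_meq_class)
  then have "int p dvd imbalance i j (b @ a) - imbalance i j (a @ b)"
    using meq_imbalance_cong[OF ij] by blast
  moreover have "imbalance i j (b @ a) - imbalance i j (a @ b) = - 2 * cross i j a b"
    by (simp add: imbalance_append cross_def)
  moreover have "\<not> int p dvd 2"
    using p_gt_2 by (auto dest: zdvd_imp_le)
  ultimately show ?thesis
    using prime_p by (simp add: prime_dvd_mult_iff)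
qed

abbreviation Z where "Z \<equiv> M\<lparr>carrier := center M\<rparr>"

sublocale Z: comm_group Z
  by (rule M.center_comm_group)

abbreviation comm_gen :: "'v \<Rightarrow> 'v \<Rightarrow> 'v list set" where
  "comm_gen x y \<equiv> commutator M (gen x) (gen y)"

lemma comm_gen_pow_in_center: "x \<in> V \<Longrightarrow> y \<in> V \<Longrightarrow> comm_gen x y [^]\<^bsub>M\<^esub> (n::nat) \<in> center M"
  by (induct n) (auto intro: subgroup.m_closed[OF M.center_subgroup] subgroup.one_closed[OF M.center_subgroup]
      commutator_gens_in_center)

lemma comm_gen_pow_mod:
  assumes "x \<in> V" "y \<in> V"
  shows "comm_gen x y [^]\<^bsub>M\<^esub> (n::nat) = comm_gen x y [^]\<^bsub>M\<^esub> (n mod p)"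
proof -
  have order_p: "comm_gen x y [^]\<^bsub>M\<^esub> p = \<one>\<^bsub>M\<^esub>"
    using assms by (simp flip: commutator_pow_right) (simp add: gen_pow_p commutator_def)
  have "comm_gen x y [^]\<^bsub>M\<^esub> n = comm_gen x y [^]\<^bsub>M\<^esub> (p * (n div p) + n mod p)"
    by simp
  also have "\<dots> = (comm_gen x y [^]\<^bsub>M\<^esub> p) [^]\<^bsub>M\<^esub> (n div p) \<otimes>\<^bsub>M\<^esub> comm_gen x y [^]\<^bsub>M\<^esub> (n mod p)"
    using assms by (simp add: M.nat_pow_mult M.nat_pow_pow)
  finally show ?thesis
    using assms order_p by simp
qed

lemma comm_gen_pow_add:
  "x \<in> V \<Longrightarrow> y \<in> V \<Longrightarrow> comm_gen x y [^]\<^bsub>M\<^esub> (m + n :: nat) = comm_gen x y [^]\<^bsub>M\<^esub> m \<otimes>\<^bsub>M\<^esub> comm_gen x y [^]\<^bsub>M\<^esub> n"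
  by (simp add: M.nat_pow_mult)

definition comm_prod :: "('v \<times> 'v \<Rightarrow> nat) \<Rightarrow> 'v list set" where
  "comm_prod e = finprod Z (\<lambda>(i, j). comm_gen i j [^]\<^bsub>M\<^esub> e (i, j)) (V \<times> V)"

lemma comm_gen_pow_Pi:
  "(\<lambda>(i, j). comm_gen i j [^]\<^bsub>M\<^esub> (e (i, j) :: nat)) \<in> V \<times> V \<rightarrow> carrier Z"
  by (auto simp: comm_gen_pow_in_center)

lemma comm_prod_mod_cong:
  assumes "\<And>i j. i \<in> V \<Longrightarrow> j \<in> V \<Longrightarrow> e (i, j) mod p = e' (i, j) mod p"
  shows "comm_prod e = comm_prod e'"
  unfolding comm_prod_def
proof (rule Z.finprod_cong'[OF HOL.refl comm_gen_pow_Pi], clarify)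
  fix i j assume "i \<in> V" "j \<in> V"
  then show "comm_gen i j [^]\<^bsub>M\<^esub> e (i, j) = comm_gen i j [^]\<^bsub>M\<^esub> e' (i, j)"
    using assms comm_gen_pow_mod[of i j "e (i, j)"] comm_gen_pow_mod[of i j "e' (i, j)"] by simp
qed

lemma comm_prod_add: "comm_prod (\<lambda>ij. e ij + e' ij) = comm_prod e \<otimes>\<^bsub>M\<^esub> comm_prod e'"
proof -
  have "comm_prod (\<lambda>ij. e ij + e' ij) = finprod Z (\<lambda>ij. (case ij of (i, j) \<Rightarrow> comm_gen i j [^]\<^bsub>M\<^esub> e (i, j))
      \<otimes>\<^bsub>Z\<^esub> (case ij of (i, j) \<Rightarrow> comm_gen i j [^]\<^bsub>M\<^esub> e' (i, j))) (V \<times> V)"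
    unfolding comm_prod_def
    by (rule Z.finprod_cong'[OF HOL.refl])
      (clarsimp simp: Pi_iff comm_gen_pow_in_center comm_gen_pow_add subgroup.m_closed[OF M.center_subgroup])+
  also have "\<dots> = comm_prod e \<otimes>\<^bsub>Z\<^esub> comm_prod e'"
    unfolding comm_prod_def by (rule Z.finprod_multf[OF comm_gen_pow_Pi comm_gen_pow_Pi])
  finally show ?thesis
    by simp
qed

lemma comm_prod_zero: "comm_prod (\<lambda>_. 0) = \<one>\<^bsub>M\<^esub>"
  using Z.finprod_one_eqI[of "V \<times> V"] by (simp add: comm_prod_def case_prod_beta)

lemma comm_prod_single:
  assumes "x \<in> V" "y \<in> V"
  shows "comm_prod (\<lambda>ij. if ij = (x, y) then 1 else 0) = comm_gen x y"
proof -
  have "comm_prod (\<lambda>ij. if ij = (x, y) then 1 else 0)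
      = finprod Z (\<lambda>ij. if (x, y) = ij then (case ij of (i, j) \<Rightarrow> comm_gen i j) else \<one>\<^bsub>Z\<^esub>) (V \<times> V)"
    unfolding comm_prod_def
    by (rule Z.finprod_cong'[OF HOL.refl]) (clarsimp simp: Pi_iff commutator_gens_in_center)+
  also have "\<dots> = comm_gen x y"
    using assms finite_V
    by (subst Z.finprod_singleton) (auto simp: Pi_iff commutator_gens_in_center)
  finally show ?thesis .
qed

lemma commutator_gen_meq_class:
  assumes "x \<in> V" "b \<in> lists V"
  shows "commutator M (gen x) (cls b) = comm_prod (\<lambda>(i, j). if i = x then count_list b j else 0)"
  using assms(2)
proof (induction b)
  case Nil
  have "comm_prod (\<lambda>(i, j). if i = x then count_list [] j else 0) = comm_prod (\<lambda>_. 0)"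
    by (rule comm_prod_mod_cong) simp
  then show ?case
    using assms(1) by (simp add: comm_prod_zero commutator_def flip: one_mekler)
next
  case (Cons y b)
  then have "commutator M (gen x) (cls (y # b)) = commutator M (gen x) (cls b) \<otimes>\<^bsub>M\<^esub> comm_gen x y"
    using assms(1) by (simp add: meq_class_Cons commutator_mult_right_mekler)
  also have "\<dots> = comm_prod (\<lambda>ij. (case ij of (i, j) \<Rightarrow> if i = x then count_list b j else 0)
      + (if ij = (x, y) then 1 else 0))"
    using Cons assms(1) by (simp add: comm_prod_add comm_prod_single)
  also have "\<dots> = comm_prod (\<lambda>(i, j). if i = x then count_list (y # b) j else 0)"
    by (rule comm_prod_mod_cong) auto
  finally show ?case .
qed

lemma commutator_meq_class_expansion:
  assumes "a \<in> lists V" "b \<in> lists V"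
  shows "commutator M (cls a) (cls b) = comm_prod (\<lambda>(i, j). count_list a i * count_list b j)"
  using assms(1)
proof (induction a)
  case Nil
  have "comm_prod (\<lambda>(i, j). count_list [] i * count_list b j) = comm_prod (\<lambda>_. 0)"
    by (rule comm_prod_mod_cong) simp
  then show ?case
    using assms(2) by (simp add: comm_prod_zero commutator_def flip: one_mekler)
next
  case (Cons x a)
  then have "commutator M (cls (x # a)) (cls b)
      = commutator M (gen x) (cls b) \<otimes>\<^bsub>M\<^esub> commutator M (cls a) (cls b)"
    using assms(2) by (simp add: meq_class_Cons commutator_mult_left_mekler)
  also have "\<dots> = comm_prod (\<lambda>ij. (case ij of (i, j) \<Rightarrow> if i = x then count_list b j else 0)
      + (case ij of (i, j) \<Rightarrow> count_list a i * count_list b j))"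
    using Cons assms(2) by (simp add: comm_prod_add commutator_gen_meq_class)
  also have "\<dots> = comm_prod (\<lambda>(i, j). count_list (x # a) i * count_list b j)"
    by (rule comm_prod_mod_cong) auto
  finally show ?case .
qed

lemma comm_prod_swap: "comm_prod e = finprod Z (\<lambda>(i, j). comm_gen j i [^]\<^bsub>M\<^esub> e (j, i)) (V \<times> V)"
proof -
  have "comm_prod e = finprod Z (\<lambda>(i, j). comm_gen i j [^]\<^bsub>M\<^esub> e (i, j)) (prod.swap ` (V \<times> V))"
    by (simp add: comm_prod_def product_swap)
  also have "\<dots> = finprod Z (\<lambda>(i, j). comm_gen j i [^]\<^bsub>M\<^esub> e (j, i)) (V \<times> V)"
    by (subst Z.finprod_reindex) (auto simp: product_swap comm_gen_pow_in_center)
  finally show ?thesis .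
qed

lemma comm_gen_swap: "i \<in> V \<Longrightarrow> j \<in> V \<Longrightarrow> comm_gen j i = inv\<^bsub>M\<^esub> comm_gen i j"
  by (simp add: M.inv_equality[OF M.commutator_swap[of "gen i" "gen j"]])

lemma comm_gen_eq_one:
  assumes "i \<in> V" "j \<in> V" "i = j \<or> E i j \<or> E j i"
  shows "comm_gen i j = \<one>\<^bsub>M\<^esub>"
proof -
  consider "i = j" | "E i j" | "E j i"
    using assms(3) by blast
  then show ?thesis
  proof cases
    case 3
    then have "comm_gen j i = \<one>\<^bsub>M\<^esub>"
      using assms by (simp add: commutator_gen_edge)
    then show ?thesis
      using comm_gen_swap[OF assms(2,1)] by simp
  qed (use assms commutator_gen_edge in simp_all)
qed

lemma comm_gen_pow_mult_swap:
  assumes "i \<in> V" "j \<in> V" "\<lbrakk>i \<noteq> j; \<not> E i j; \<not> E j i\<rbrakk> \<Longrightarrow> m mod p = n mod p"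
  shows "comm_gen i j [^]\<^bsub>M\<^esub> (m::nat) \<otimes>\<^bsub>M\<^esub> comm_gen j i [^]\<^bsub>M\<^esub> (n::nat) = \<one>\<^bsub>M\<^esub>"
proof -
  have "comm_gen i j [^]\<^bsub>M\<^esub> m = comm_gen i j [^]\<^bsub>M\<^esub> n"
  proof (cases "i = j \<or> E i j \<or> E j i")
    case True
    then show ?thesis
      using assms comm_gen_eq_one by simp
  next
    case False
    then show ?thesis
      using assms comm_gen_pow_mod[OF assms(1,2), of m] comm_gen_pow_mod[OF assms(1,2), of n] by simp
  qed
  then show ?thesis
    using assms by (simp add: comm_gen_swap[of i j] M.nat_pow_inv)
qed

text \<open>Halving exponents (possible as \<open>p\<close> is odd) splits \<open>comm_prod e\<close> into two equal halves;
  writing the second one with swapped indices, the factors for \<open>(i, j)\<close> and \<open>(j, i)\<close> cancel.\<close>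

lemma comm_prod_eq_one:
  assumes sym_mod: "\<And>i j. \<lbrakk>i \<in> V; j \<in> V; i \<noteq> j; \<not> E i j; \<not> E j i\<rbrakk> \<Longrightarrow> e (i, j) mod p = e (j, i) mod p"
  shows "comm_prod e = \<one>\<^bsub>M\<^esub>"
proof -
  define h where "h = (p + 1) div 2"
  have two_h: "2 * h = p + 1"
    using prime_p p_gt_2 by (simp add: h_def prime_odd_nat)
  define f where "f = (\<lambda>(i, j). comm_gen i j [^]\<^bsub>M\<^esub> (h * e (i, j)))"
  define g where "g = (\<lambda>(i, j). comm_gen j i [^]\<^bsub>M\<^esub> (h * e (j, i)))"
  have f: "f \<in> V \<times> V \<rightarrow> carrier Z" and g: "g \<in> V \<times> V \<rightarrow> carrier Z"
    by (auto simp: f_def g_def comm_gen_pow_in_center)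
  have halves: "h * x + h * x = x + x * p" for x
  proof -
    have "h * x + h * x = (2 * h) * x" by simp
    then show ?thesis using two_h by simp
  qed
  have "comm_prod e = comm_prod (\<lambda>ij. h * e ij + h * e ij)"
    by (rule comm_prod_mod_cong) (simp only: halves mod_mult_self1)
  also have "\<dots> = comm_prod (\<lambda>ij. h * e ij) \<otimes>\<^bsub>Z\<^esub> comm_prod (\<lambda>ij. h * e ij)"
    by (simp add: comm_prod_add)
  also have "\<dots> = finprod Z f (V \<times> V) \<otimes>\<^bsub>Z\<^esub> finprod Z g (V \<times> V)"
    using comm_prod_swap[of "\<lambda>ij. h * e ij"] by (simp add: comm_prod_def f_def g_def)
  also have "\<dots> = finprod Z (\<lambda>ij. f ij \<otimes>\<^bsub>Z\<^esub> g ij) (V \<times> V)"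
    by (rule Z.finprod_multf[OF f g, symmetric])
  also have "\<dots> = \<one>\<^bsub>Z\<^esub>"
  proof (rule Z.finprod_one_eqI, clarify)
    fix i j assume ij: "i \<in> V" "j \<in> V"
    have "h * e (i, j) mod p = h * e (j, i) mod p" if "i \<noteq> j" "\<not> E i j" "\<not> E j i"
      using ij that sym_mod by (metis mod_mult_right_eq)
    then show "f (i, j) \<otimes>\<^bsub>Z\<^esub> g (i, j) = \<one>\<^bsub>Z\<^esub>"
      using comm_gen_pow_mult_swap[OF ij] by (simp add: f_def g_def)
  qed
  finally show ?thesis by simp
qed

lemma commute_if_cross_dvd:
  assumes "a \<in> lists V" "b \<in> lists V"
    and cross: "\<And>i j. \<lbrakk>i \<in> V; j \<in> V; i \<noteq> j; \<not> E i j; \<not> E j i\<rbrakk> \<Longrightarrow> int p dvd cross i j a b"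
  shows "cls a \<otimes>\<^bsub>M\<^esub> cls b = cls b \<otimes>\<^bsub>M\<^esub> cls a"
proof -
  have "commutator M (cls a) (cls b) = \<one>\<^bsub>M\<^esub>"
    unfolding commutator_meq_class_expansion[OF assms(1,2)]
  proof (rule comm_prod_eq_one)
    fix i j assume "i \<in> V" "j \<in> V" "i \<noteq> j" "\<not> E i j" "\<not> E j i"
    then have "int p dvd int (count_list a i * count_list b j) - int (count_list a j * count_list b i)"
      using cross by (simp add: cross_def occ_def)
    then show "(case (i, j) of (i, j) \<Rightarrow> count_list a i * count_list b j) mod p
        = (case (j, i) of (i, j) \<Rightarrow> count_list a i * count_list b j) mod p"
      unfolding prod.case by (simp add: int_dvd_diff_imp_mod_eq)
  qed
  then show ?thesis
    using assms by (simp add: M.commutator_eq_one_iff)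
qed

end

section \<open>Centralizers in Mekler groups of C4-free graphs\<close>

definition c4_free :: "('v \<Rightarrow> 'v \<Rightarrow> bool) \<Rightarrow> bool" where
  "c4_free E \<longleftrightarrow> \<not> (\<exists>s1 s2 i j. s1 \<noteq> s2 \<and> i \<noteq> j \<and> E s1 i \<and> E s2 i \<and> E s1 j \<and> E s2 j)"

definition parallel_off_edges :: "int \<Rightarrow> 'v set \<Rightarrow> ('v \<Rightarrow> 'v \<Rightarrow> bool) \<Rightarrow> ('v \<Rightarrow> int) \<Rightarrow> ('v \<Rightarrow> int) \<Rightarrow> bool" where
  "parallel_off_edges q V E d e \<longleftrightarrow> (\<forall>i\<in>V. \<forall>j\<in>V. i \<noteq> j \<longrightarrow> \<not> E i j \<longrightarrow> q dvd d i * e j - d j * e i)"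

lemma parallel_off_edges_adjacent:
  assumes "Factorial_Ring.prime q" "parallel_off_edges q V E d g"
    and "s \<in> V" "\<not> q dvd d s" "x \<in> V" "q dvd d x" "\<not> q dvd g x"
  shows "E s x"
proof (rule ccontr)
  assume "\<not> E s x"
  moreover have "s \<noteq> x"
    using assms by auto
  ultimately have "q dvd d s * g x - d x * g s"
    using assms(2,3,5) by (simp add: parallel_off_edges_def)
  moreover have "q dvd d x * g s"
    using assms(6) by simp
  ultimately have "q dvd (d s * g x - d x * g s) + d x * g s"
    by (rule dvd_add)
  then have "q dvd d s * g x"
    by simp
  then show False
    using assms by (simp add: prime_dvd_mult_iff)
qed

text \<open>Where \<open>d\<close> vanishes mod \<open>q\<close>, a non-vanishing \<open>e\<close> or \<open>f\<close> forces adjacency to both units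
  \<open>s\<^sub>1\<close>, \<open>s\<^sub>2\<close> of \<open>d\<close>; C4-freeness forbids this at two vertices \<open>i\<close>, \<open>j\<close> at once.\<close>

lemma parallel_off_edges_zeros:
  assumes q: "Factorial_Ring.prime q" and c4: "c4_free E"
    and de: "parallel_off_edges q V E d e" and df: "parallel_off_edges q V E d f"
    and s: "s1 \<in> V" "s2 \<in> V" "s1 \<noteq> s2" "\<not> q dvd d s1" "\<not> q dvd d s2"
    and ij: "i \<in> V" "j \<in> V" "i \<noteq> j" "q dvd d i" "q dvd d j"
  shows "q dvd e i * f j"
proof (rule ccontr)
  assume "\<not> q dvd e i * f j"
  then have "\<not> q dvd e i" "\<not> q dvd f j"
    by (meson dvd_mult dvd_mult2)+
  then have "E s1 i" "E s2 i" "E s1 j" "E s2 j"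
    using parallel_off_edges_adjacent[OF q de] parallel_off_edges_adjacent[OF q df] s ij by blast+
  then show False
    using c4 s(3) ij(3) unfolding c4_free_def by blast
qed

lemma parallel_off_edges_common:
  assumes q: "Factorial_Ring.prime q" and c4: "c4_free E" and sym: "\<And>x y. E x y \<Longrightarrow> E y x"
    and de: "parallel_off_edges q V E d e" and df: "parallel_off_edges q V E d f"
    and s: "s1 \<in> V" "s2 \<in> V" "s1 \<noteq> s2" "\<not> q dvd d s1" "\<not> q dvd d s2"
  shows "parallel_off_edges q V E e f"
  unfolding parallel_off_edges_def
proof (intro ballI impI)
  fix i j assume ij: "i \<in> V" "j \<in> V" "i \<noteq> j" "\<not> E i j"
  then have ji: "\<not> E j i"
    using sym by blast
  have de_ij: "q dvd d i * e j - d j * e i" and df_ij: "q dvd d i * f j - d j * f i"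
    and de_ji: "q dvd d j * e i - d i * e j" and df_ji: "q dvd d j * f i - d i * f j"
    using de df ij ji by (auto simp: parallel_off_edges_def)
  consider "\<not> q dvd d i" | "\<not> q dvd d j" | "q dvd d i" "q dvd d j"
    by blast
  then show "q dvd e i * f j - e j * f i"
  proof cases
    case 1
    have "d i * (e i * f j - e j * f i) = e i * (d i * f j - d j * f i) - f i * (d i * e j - d j * e i)"
      by (simp add: algebra_simps)
    then have "q dvd d i * (e i * f j - e j * f i)"
      using de_ij df_ij by simp
    then show ?thesis
      using q 1 by (simp add: prime_dvd_mult_iff)
  next
    case 2
    have "d j * (e i * f j - e j * f i) = f j * (d j * e i - d i * e j) - e j * (d j * f i - d i * f j)"
      by (simp add: algebra_simps)
    then have "q dvd d j * (e i * f j - e j * f i)"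
      using de_ji df_ji by simp
    then show ?thesis
      using q 2 by (simp add: prime_dvd_mult_iff)
  next
    case 3
    then have "q dvd e i * f j" "q dvd e j * f i"
      using parallel_off_edges_zeros[OF q c4 de df s] ij by auto
    then show ?thesis
      by (simp add: dvd_diff)
  qed
qed

context mekler_odd_prime
begin

lemma parallel_if_commute:
  assumes sym: "\<And>x y. E x y \<Longrightarrow> E y x"
    and "a \<in> lists V" "b \<in> lists V" "cls a \<otimes>\<^bsub>M\<^esub> cls b = cls b \<otimes>\<^bsub>M\<^esub> cls a"
  shows "parallel_off_edges (int p) V E (\<lambda>i. occ i a) (\<lambda>i. occ i b)"
  using cross_dvd_if_commute[OF assms(2-4)] sym by (auto simp: parallel_off_edges_def cross_def)

lemma centralizer_commutative:
  assumes sym: "\<And>x y. E x y \<Longrightarrow> E y x" and c4: "c4_free E"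
    and v: "v \<in> carrier M" "s1 \<in> msupp p V E v" "s2 \<in> msupp p V E v" "s1 \<noteq> s2"
    and y: "y \<in> carrier M" "v \<otimes>\<^bsub>M\<^esub> y = y \<otimes>\<^bsub>M\<^esub> v"
    and z: "z \<in> carrier M" "v \<otimes>\<^bsub>M\<^esub> z = z \<otimes>\<^bsub>M\<^esub> v"
  shows "y \<otimes>\<^bsub>M\<^esub> z = z \<otimes>\<^bsub>M\<^esub> y"
proof -
  obtain dv a b where words: "dv \<in> lists V" "v = cls dv" "a \<in> lists V" "y = cls a" "b \<in> lists V" "z = cls b"
    using v(1) y(1) z(1) by (auto simp: carrier_mekler)
  have s: "s1 \<in> V" "s2 \<in> V"
    using v by (auto simp: msupp_def)
  have units: "\<not> int p dvd occ s1 dv" "\<not> int p dvd occ s2 dv"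
    using exponent_msupp[OF v(2)] exponent_msupp[OF v(3)] words by (auto simp: exponent_meq_class)
  have "cls dv \<otimes>\<^bsub>M\<^esub> cls a = cls a \<otimes>\<^bsub>M\<^esub> cls dv" "cls dv \<otimes>\<^bsub>M\<^esub> cls b = cls b \<otimes>\<^bsub>M\<^esub> cls dv"
    using y(2) z(2) words(2,4,6) by simp_all
  then have "parallel_off_edges (int p) V E (\<lambda>i. occ i dv) (\<lambda>i. occ i a)"
    "parallel_off_edges (int p) V E (\<lambda>i. occ i dv) (\<lambda>i. occ i b)"
    using parallel_if_commute[OF sym words(1,3)] parallel_if_commute[OF sym words(1,5)] by blast+
  then have "parallel_off_edges (int p) V E (\<lambda>i. occ i a) (\<lambda>i. occ i b)"
    using parallel_off_edges_common[OF _ c4 sym _ _ s v(4) units] prime_p by simp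
  then have "cls a \<otimes>\<^bsub>M\<^esub> cls b = cls b \<otimes>\<^bsub>M\<^esub> cls a"
    using words by (intro commute_if_cross_dvd) (simp_all add: parallel_off_edges_def cross_def)
  then show ?thesis
    using words by simp
qed

end

section \<open>CFI graphs\<close>

lemma Ext_in_cfi_V [simp]: "Ext v w b \<in> cfi_V V E \<longleftrightarrow> v \<in> V \<and> E v w"
  by (auto simp: cfi_V_def)

lemma Inner_in_cfi_V [simp]: "Inner v S \<in> cfi_V V E \<longleftrightarrow> v \<in> V \<and> S \<subseteq> {w. E v w} \<and> even (card S)"
  by (auto simp: cfi_V_def)

lemma cfi_E_Inner_Inner [simp]: "\<not> cfi_E V E T (Inner v S) (Inner v' S')"
  by (auto simp: cfi_E_def)

lemma cfi_E_Inner_Ext [simp]: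
  "cfi_E V E T (Inner v S) (Ext v' w b) \<longleftrightarrow>
     Inner v S \<in> cfi_V V E \<and> Ext v' w b \<in> cfi_V V E \<and> v' = v \<and> (b \<longleftrightarrow> w \<in> S)"
  by (auto simp: cfi_E_def simp del: Ext_in_cfi_V Inner_in_cfi_V)

lemma cfi_E_Ext_Inner [simp]:
  "cfi_E V E T (Ext v' w b) (Inner v S) \<longleftrightarrow>
     Inner v S \<in> cfi_V V E \<and> Ext v' w b \<in> cfi_V V E \<and> v' = v \<and> (b \<longleftrightarrow> w \<in> S)"
  by (auto simp: cfi_E_def simp del: Ext_in_cfi_V Inner_in_cfi_V)

lemma cfi_E_Ext_Ext [simp]:
  "cfi_E V E T (Ext v w b) (Ext v' w' b') \<longleftrightarrow>
     Ext v w b \<in> cfi_V V E \<and> Ext v' w' b' \<in> cfi_V V E \<and> v' = w \<and> w' = v \<and> (b' \<longleftrightarrow> (b \<noteq> ({v, w} \<in> T)))"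
  by (auto simp: cfi_E_def simp del: Ext_in_cfi_V Inner_in_cfi_V)

lemma cfi_E_sym: "cfi_E V E T x y \<Longrightarrow> cfi_E V E T y x"
  by (cases x; cases y) (auto simp: insert_commute)

lemma finite_cfi_V:
  assumes "simple_graph V E"
  shows "finite (cfi_V V E)"
proof -
  have EV: "\<And>x y. E x y \<Longrightarrow> x \<in> V \<and> y \<in> V"
    using assms by (simp add: simple_graph_def)
  have "cfi_V V E \<subseteq> (\<lambda>(v, w, b). Ext v w b) ` (V \<times> V \<times> UNIV) \<union> (\<lambda>(v, S). Inner v S) ` (V \<times> Pow V)"
    using EV by (auto simp: cfi_V_def image_iff) (use EV in blast)
  moreover have "finite ((\<lambda>(v, w, b). Ext v w b) ` (V \<times> V \<times> (UNIV :: bool set)) \<union> (\<lambda>(v, S). Inner v S) ` (V \<times> Pow V))"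
    using assms by (simp add: simple_graph_def)
  ultimately show ?thesis
    by (rule finite_subset)
qed

lemma regular3_other_neighbours:
  assumes "regular3 V E" "v \<in> V" "E v w"
  obtains w' w'' where "{y. E v y} = {w, w', w''}" "w \<noteq> w'" "w \<noteq> w''" "w' \<noteq> w''"
proof -
  obtain x y z where "{y. E v y} = {x, y, z}" "x \<noteq> y" "y \<noteq> z" "x \<noteq> z"
    using assms by (auto simp: regular3_def card_3_iff)
  moreover have "w \<in> {x, y, z}"
    using calculation assms by blast
  ultimately show ?thesis
    using that by (auto simp: insert_commute)
qed

lemma regular3_third_neighbour:
  assumes "regular3 V E" "v \<in> V" "E v w" "E v w'" "w \<noteq> w'"
  obtains w'' where "{y. E v y} = {w, w', w''}" "w'' \<noteq> w" "w'' \<noteq> w'"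
proof -
  obtain x y where "{y. E v y} = {w, x, y}" "w \<noteq> x" "w \<noteq> y" "x \<noteq> y"
    using regular3_other_neighbours[OF assms(1-3)] by blast
  moreover have "w' \<in> {x, y}"
    using calculation(1) assms(4,5) by (auto simp: set_eq_iff)
  ultimately show ?thesis
    using that by (auto simp: insert_commute)
qed

lemma cfi_nonadjacent_neighbours:
  assumes sg: "simple_graph V E" and r3: "regular3 V E" and a: "a \<in> cfi_V V E"
  obtains n1 n2 where "n1 \<in> cfi_V V E" "n2 \<in> cfi_V V E" "n1 \<noteq> n2"
    "cfi_E V E T a n1" "cfi_E V E T a n2" "\<not> cfi_E V E T n1 n2"
proof (cases a)
  case (Ext v w b)
  then have vw: "v \<in> V" "E v w"
    using a by auto
  obtain w' w'' where N: "{y. E v y} = {w, w', w''}" "w \<noteq> w'" "w \<noteq> w''" "w' \<noteq> w''"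
    using regular3_other_neighbours[OF r3 vw] .
  define S1 where "S1 = (if b then {w, w'} else {})"
  define S2 where "S2 = (if b then {w, w''} else {w', w''})"
  have "S1 \<subseteq> {y. E v y}" "even (card S1)" "b \<longleftrightarrow> w \<in> S1"
    "S2 \<subseteq> {y. E v y}" "even (card S2)" "b \<longleftrightarrow> w \<in> S2" "S1 \<noteq> S2"
    using N by (auto simp: S1_def S2_def doubleton_eq_iff)
  then show ?thesis
    using that[of "Inner v S1" "Inner v S2"] vw Ext by simp
next
  case (Inner v S)
  then have v: "v \<in> V"
    using a by auto
  obtain x y z where N: "{y. E v y} = {x, y, z}" "x \<noteq> y" "y \<noteq> z" "x \<noteq> z"
    using r3 v by (auto simp: regular3_def card_3_iff)
  then have "E v x" "E v y" "v \<noteq> x"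
    using sg by (auto simp: simple_graph_def)
  then show ?thesis
    using that[of "Ext v x (x \<in> S)" "Ext v y (y \<in> S)"] v Inner a N by auto
qed

lemma even_subsets_of_triple_eq:
  assumes "S \<subseteq> {w1, w2, w3}" "S' \<subseteq> {w1, w2, w3}" "even (card S)" "even (card S')"
    "w1 \<in> S \<longleftrightarrow> w1 \<in> S'" "w2 \<in> S \<longleftrightarrow> w2 \<in> S'" "w3 \<noteq> w1" "w3 \<noteq> w2"
  shows "S = S'"
proof (rule ccontr)
  assume "S \<noteq> S'"
  then have "S = insert w3 S' \<and> w3 \<notin> S' \<or> S' = insert w3 S \<and> w3 \<notin> S"
    using assms by blast
  moreover have "finite S" "finite S'"
    using assms(1,2) finite_subset by auto
  ultimately show False
    using assms(3,4) by auto
qed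

text \<open>A 4-cycle through an inner vertex \<open>Inner v S\<close> would give a second even subset \<open>S'\<close>
  of the three neighbours of \<open>v\<close> agreeing with \<open>S\<close> on two of them.\<close>

lemma cfi_no_4_cycle_at_Inner:
  assumes r3: "regular3 V E" and s1: "s1 = Inner v S" and ne: "s1 \<noteq> s2" "i \<noteq> j"
    and e: "cfi_E V E T s1 i" "cfi_E V E T s1 j" "cfi_E V E T s2 i" "cfi_E V E T s2 j"
  shows False
proof -
  obtain wi bi where i: "i = Ext v wi bi" "bi \<longleftrightarrow> wi \<in> S" "E v wi" "v \<in> V" "S \<subseteq> {w. E v w}" "even (card S)"
    using e(1) s1 by (cases i) auto
  obtain wj bj where j: "j = Ext v wj bj" "bj \<longleftrightarrow> wj \<in> S" "E v wj"
    using e(2) s1 by (cases j) auto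
  have wij: "wi \<noteq> wj"
    using i j ne by auto
  obtain S' where s2: "s2 = Inner v S'" "wi \<in> S' \<longleftrightarrow> bi" "wj \<in> S' \<longleftrightarrow> bj" "S' \<subseteq> {w. E v w}" "even (card S')"
    using e(3,4) i j wij by (cases s2) auto
  obtain w3 where "{y. E v y} = {wi, wj, w3}" "w3 \<noteq> wi" "w3 \<noteq> wj"
    using regular3_third_neighbour[OF r3 i(4) i(3) j(3) wij] .
  then have "S = S'"
    using i j s2 by (intro even_subsets_of_triple_eq[of S wi wj w3 S']) auto
  then show False
    using s1 s2 ne by simp
qed

lemma c4_free_cfi:
  assumes "regular3 V E"
  shows "c4_free (cfi_E V E T)"
  unfolding c4_free_def
proof (intro notI, elim exE conjE)
  fix s1 s2 i j
  assume ne: "s1 \<noteq> s2" "i \<noteq> j"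
    and e: "cfi_E V E T s1 i" "cfi_E V E T s2 i" "cfi_E V E T s1 j" "cfi_E V E T s2 j"
  have e': "cfi_E V E T i s1" "cfi_E V E T i s2" "cfi_E V E T j s1" "cfi_E V E T j s2"
    using e by (simp_all add: cfi_E_sym)
  consider (s1) v S where "s1 = Inner v S" | (s2) v S where "s2 = Inner v S"
    | (i) v S where "i = Inner v S" | (j) v S where "j = Inner v S"
    | (ext) a b c a' b' c' a'' b'' c'' where "s1 = Ext a b c" "i = Ext a' b' c'" "j = Ext a'' b'' c''"
    by (metis cfi_vert.exhaust)
  then show False
  proof cases
    case ext
    then show False
      using e(1,3) ne(2) by auto
  qed (use assms ne e e' cfi_no_4_cycle_at_Inner in \<open>metis+\<close>)
qed

section \<open>The pebble game\<close>

fun place :: "nat \<Rightarrow> 'g list \<Rightarrow> 'h list \<Rightarrow> (nat \<Rightarrow> ('g \<times> 'h) option) \<Rightarrow> nat \<Rightarrow> ('g \<times> 'h) option" where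
  "place n (g # gs) (h # hs) pos = place (Suc n) gs hs (pos(n := Some (g, h)))"
| "place n _ _ pos = pos"

lemma spoiler_wins_by_placing:
  assumes "n + length gs \<le> Suc k" "set gs \<subseteq> carrier G"
    and "\<And>hs. length hs = length gs \<Longrightarrow> set hs \<subseteq> carrier H \<Longrightarrow> \<not> pebble_ok G H (place n gs hs pos)"
  shows "spoiler_wins G H k (length gs) pos"
  using assms
proof (induction gs arbitrary: n pos)
  case Nil
  then show ?case
    using Nil.prems(3)[of "[]"] by simp
next
  case (Cons g gs)
  have "spoiler_wins G H k (length gs) (pos(n := Some (g, h)))" if "h \<in> carrier H" for h
  proof (rule Cons.IH[of "Suc n"])
    fix hs assume "length hs = length gs" "set hs \<subseteq> carrier H"
    then show "\<not> pebble_ok G H (place (Suc n) gs hs (pos(n := Some (g, h))))"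
      using Cons.prems(3)[of "h # hs"] that by simp
  qed (use Cons.prems in auto)
  moreover have "n \<le> k" "g \<in> carrier G"
    using Cons.prems by auto
  ultimately show ?case
    by auto
qed

lemma spoiler_wins_by_centralizers:
  assumes "monoid G" "5 \<le> k"
    and "u \<in> carrier G" "y \<in> carrier G" "z \<in> carrier G"
    and comm: "u \<otimes>\<^bsub>G\<^esub> y = y \<otimes>\<^bsub>G\<^esub> u" "u \<otimes>\<^bsub>G\<^esub> z = z \<otimes>\<^bsub>G\<^esub> u" and ncomm: "y \<otimes>\<^bsub>G\<^esub> z \<noteq> z \<otimes>\<^bsub>G\<^esub> y"
    and centralizer: "\<And>y' z'. \<lbrakk>y' \<in> carrier H; z' \<in> carrier H; v \<otimes>\<^bsub>H\<^esub> y' = y' \<otimes>\<^bsub>H\<^esub> v;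
      v \<otimes>\<^bsub>H\<^esub> z' = z' \<otimes>\<^bsub>H\<^esub> v\<rbrakk> \<Longrightarrow> y' \<otimes>\<^bsub>H\<^esub> z' = z' \<otimes>\<^bsub>H\<^esub> y'"
  shows "spoiler_wins G H k 5 ((\<lambda>_. None)(0 := Some (u, v)))"
proof -
  let ?gs = "[y, z, u \<otimes>\<^bsub>G\<^esub> y, u \<otimes>\<^bsub>G\<^esub> z, y \<otimes>\<^bsub>G\<^esub> z]"
  have "spoiler_wins G H k (length ?gs) ((\<lambda>_. None)(0 := Some (u, v)))"
  proof (rule spoiler_wins_by_placing)
    show "1 + length ?gs \<le> Suc k" "set ?gs \<subseteq> carrier G"
      using assms by (auto intro: monoid.m_closed)
  next
    fix hs assume "length hs = length ?gs" "set hs \<subseteq> carrier H"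
    then obtain y' z' w1 w2 w3 where hs: "hs = [y', z', w1, w2, w3]" "y' \<in> carrier H" "z' \<in> carrier H"
      by (auto simp: length_Suc_conv)
    show "\<not> pebble_ok G H (place 1 ?gs hs ((\<lambda>_. None)(0 := Some (u, v))))"
    proof
      assume ok: "pebble_ok G H (place 1 ?gs hs ((\<lambda>_. None)(0 := Some (u, v))))"
      note ok = ok[unfolded hs(1) pebble_ok_def, rule_format]
      have "v \<otimes>\<^bsub>H\<^esub> y' = w1" "v \<otimes>\<^bsub>H\<^esub> z' = w2" "y' \<otimes>\<^bsub>H\<^esub> z' = w3"
        using ok[of 0 u v 1 y y' 3] ok[of 0 u v 2 z z' 4] ok[of 1 y y' 2 z z' 5] by simp_all
      moreover have "y' \<otimes>\<^bsub>H\<^esub> v = w1" "z' \<otimes>\<^bsub>H\<^esub> v = w2" "z' \<otimes>\<^bsub>H\<^esub> y' \<noteq> w3"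
        using ok[of 1 y y' 0 u v 3] ok[of 2 z z' 0 u v 4] ok[of 2 z z' 1 y y' 5] comm ncomm by simp_all
      ultimately show False
        using centralizer[OF hs(2,3)] by auto
    qed
  qed
  then show ?thesis
    by (simp add: eval_nat_numeral del: spoiler_wins.simps)
qed

context mekler_odd_prime
begin

lemma gens_not_commute:
  assumes "x \<in> V" "y \<in> V" "x \<noteq> y" "\<not> E x y" "\<not> E y x"
  shows "gen x \<otimes>\<^bsub>M\<^esub> gen y \<noteq> gen y \<otimes>\<^bsub>M\<^esub> gen x"
proof
  assume "gen x \<otimes>\<^bsub>M\<^esub> gen y = gen y \<otimes>\<^bsub>M\<^esub> gen x"
  then have "int p dvd cross x y [x] [y]"
    using cross_dvd_if_commute[of "[x]" "[y]" x y] assms by (simp add: mgen_def)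
  then show False
    using assms(3) p_gt_2 by (simp add: cross_def)
qed

lemma commutes_with_gen_of_neighbour:
  assumes "a \<in> V" "n \<in> V" "E a n" "c \<in> center M"
  shows "(gen a [^]\<^bsub>M\<^esub> (k::nat) \<otimes>\<^bsub>M\<^esub> c) \<otimes>\<^bsub>M\<^esub> gen n = gen n \<otimes>\<^bsub>M\<^esub> (gen a [^]\<^bsub>M\<^esub> k \<otimes>\<^bsub>M\<^esub> c)"
proof -
  have c: "c \<in> carrier M"
    using assms(4) M.center_subset_carrier by blast
  have "gen a \<otimes>\<^bsub>M\<^esub> gen n = gen n \<otimes>\<^bsub>M\<^esub> gen a"
    using assms commutator_gen_edge M.commutator_eq_one_iff by simp
  then have "gen a [^]\<^bsub>M\<^esub> k \<otimes>\<^bsub>M\<^esub> gen n = gen n \<otimes>\<^bsub>M\<^esub> gen a [^]\<^bsub>M\<^esub> k"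
    using assms M.group_commutes_pow[of "gen a" "gen n" k] by simp
  moreover have "c \<otimes>\<^bsub>M\<^esub> gen n = gen n \<otimes>\<^bsub>M\<^esub> c"
    using M.centerD[OF assms(4) gen_in_carrier[OF assms(2)]] .
  ultimately show ?thesis
    using assms c by (metis M.m_assoc M.nat_pow_closed gen_in_carrier)
qed

lemma spoiler_wins_single_vs_wide_support:
  assumes sym: "\<And>x y. E x y \<Longrightarrow> E y x" and c4: "c4_free E"
    and nbrs: "\<And>a. a \<in> V \<Longrightarrow> \<exists>n1 n2. n1 \<in> V \<and> n2 \<in> V \<and> n1 \<noteq> n2 \<and> E a n1 \<and> E a n2 \<and> \<not> E n1 n2"
    and u: "u \<in> carrier M" "card (msupp p V E u) = 1"
    and v: "v \<in> carrier M" "1 < card (msupp p V E v)"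
  shows "spoiler_wins M M 5 5 ((\<lambda>_. None)(0 := Some (u, v)))"
proof -
  obtain a where "msupp p V E u = {a}"
    using u(2) by (auto simp: card_1_singleton_iff)
  then obtain k c where a: "a \<in> V" "c \<in> center M" "u = gen a [^]\<^bsub>M\<^esub> (k::nat) \<otimes>\<^bsub>M\<^esub> c"
    by (rule msupp_singleton)
  obtain n1 n2 where n: "n1 \<in> V" "n2 \<in> V" "n1 \<noteq> n2" "E a n1" "E a n2" "\<not> E n1 n2"
    using nbrs[OF a(1)] by blast
  obtain s1 s2 where s: "s1 \<in> msupp p V E v" "s2 \<in> msupp p V E v" "s1 \<noteq> s2"
  proof -
    have "\<not> card (msupp p V E v) \<le> Suc 0" "finite (msupp p V E v)"
      using v(2) by (auto intro: card_ge_0_finite)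
    then show ?thesis
      using that by (auto simp: card_le_Suc0_iff_eq)
  qed
  show ?thesis
  proof (rule spoiler_wins_by_centralizers)
    show "gen n1 \<otimes>\<^bsub>M\<^esub> gen n2 \<noteq> gen n2 \<otimes>\<^bsub>M\<^esub> gen n1"
      using n sym by (intro gens_not_commute) auto
    show "u \<otimes>\<^bsub>M\<^esub> gen n1 = gen n1 \<otimes>\<^bsub>M\<^esub> u" "u \<otimes>\<^bsub>M\<^esub> gen n2 = gen n2 \<otimes>\<^bsub>M\<^esub> u"
      using a n commutes_with_gen_of_neighbour by simp_all
    show "y' \<otimes>\<^bsub>M\<^esub> z' = z' \<otimes>\<^bsub>M\<^esub> y'"
      if "y' \<in> carrier M" "z' \<in> carrier M" "v \<otimes>\<^bsub>M\<^esub> y' = y' \<otimes>\<^bsub>M\<^esub> v" "v \<otimes>\<^bsub>M\<^esub> z' = z' \<otimes>\<^bsub>M\<^esub> v"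
      for y' z'
      using centralizer_commutative[OF sym c4 v(1) s that(1,3,2,4)] .
  qed (use u n M.monoid_axioms in auto)
qed

end

lemma spoiler_wins_cfi:
  assumes "Factorial_Ring.prime p" "2 < p" "simple_graph V E" "regular3 V E"
    and "u \<in> carrier (mekler p (cfi_V V E) (cfi_E V E T))" "card (msupp p (cfi_V V E) (cfi_E V E T) u) = 1"
    and "v \<in> carrier (mekler p (cfi_V V E) (cfi_E V E T))" "1 < card (msupp p (cfi_V V E) (cfi_E V E T) v)"
  shows "spoiler_wins (mekler p (cfi_V V E) (cfi_E V E T)) (mekler p (cfi_V V E) (cfi_E V E T))
    5 5 ((\<lambda>_. None)(0 := Some (u, v)))"
proof -
  interpret mekler_odd_prime p "cfi_V V E" "cfi_E V E T"
    using assms finite_cfi_V[OF assms(3)] by unfold_locales (auto simp: prime_gt_0_nat)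
  show ?thesis
  proof (rule spoiler_wins_single_vs_wide_support)
    show "c4_free (cfi_E V E T)"
      using assms(4) by (rule c4_free_cfi)
    show "\<exists>n1 n2. n1 \<in> cfi_V V E \<and> n2 \<in> cfi_V V E \<and> n1 \<noteq> n2
        \<and> cfi_E V E T a n1 \<and> cfi_E V E T a n2 \<and> \<not> cfi_E V E T n1 n2" if "a \<in> cfi_V V E" for a
      using cfi_nonadjacent_neighbours[OF assms(3,4) that] by metis
  qed (use assms cfi_E_sym in auto)
qed

lemma log2_log2_of_nat_nonneg: "0 \<le> log 2 (log 2 (real n))"
proof (cases "n \<le> 1")
  case True
  then have "n = 0 \<or> n = 1"
    by auto
  then show ?thesis
    by (auto simp: log_def) \<comment> \<open>junk value \<open>ln 0 = 0\<close>\<close>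
next
  case False
  then have "1 \<le> log 2 (real n)"
    by simp
  then show ?thesis
    by simp
qed

theorem lemma4p19:
  shows "\<exists>(k::nat) (C::real). \<forall>(p::nat) (V::nat set) (E::nat \<Rightarrow> nat \<Rightarrow> bool) (T::nat set set) u v.
    Factorial_Ring.prime p \<and> p > 2 \<and> simple_graph V E \<and> regular3 V E \<and> graph_connected V E
    \<and> (T = {} \<or> (\<exists>x y. E x y \<and> T = {{x, y}}))
    \<and> u \<in> carrier (mekler p (cfi_V V E) (cfi_E V E T))
    \<and> v \<in> carrier (mekler p (cfi_V V E) (cfi_E V E T))
    \<and> card (msupp p (cfi_V V E) (cfi_E V E T) u) = 1
    \<and> card (msupp p (cfi_V V E) (cfi_E V E T) v) > 1
    \<longrightarrow> (\<exists>r::nat. real r \<le> C * log 2 (log 2 (real (card (carrier (mekler p (cfi_V V E) (cfi_E V E T)))))) + C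
          \<and> spoiler_wins (mekler p (cfi_V V E) (cfi_E V E T)) (mekler p (cfi_V V E) (cfi_E V E T))
               k r ((\<lambda>_. None)(0 := Some (u, v))))"
  by (intro exI[of _ "5::nat"] exI[of _ "5::real"] allI impI conjI)
    (simp_all add: log2_log2_of_nat_nonneg spoiler_wins_cfi)

end
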